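(* Let $I\subset[0,+\infty)$ be an open interval, $n\in\mathbb{N}$, $\beta\in\{-1,1\}$, $N\ge n$, $\xi\in[0,1]$, $t_0\in I$ and $T>0$ fixed with $t_0+\beta T\in I$. Let $\{\varpi(\tau),\tau\ge0\}$ be a continuous parameter stochastic process whose mean value and variance functions are continuous and such that $\varpi(s)$ and $\varpi(t)$ are independent for all $s\neq t$. Sample it with an equidistant sampling period $T_s$, $m=T/T_s\in\mathbb{N}$. If $\kappa,\mu>-\frac12$, then $$\lim_{m\to\infty}\mathrm{Var}\big[e^{\beta T}_{\varpi,m}(t_0)\big]=0 .$$
   Context: For $a,b>-1$ let $w^{a,b}(t)=t^{b}(1-t)^{a}$, $P_k^{a,b}(t)=\sum_{s=0}^{k}\binom{k+a}{s}\binom{k+b}{k-s}(t-1)^{k-s}t^{s}$, $\|P_k^{a,b}\|^2=\int_0^1 w^{a,b}(P_k^{a,b})^2$. With $q=N-n$, the Jacobi estimator kernel is $$p^{\beta T}(\tau)=\frac{(-1)^n}{(\beta T)^n}\sum_{i=0}^{q}\frac{P_i^{\mu+n,\kappa+n}(\xi)}{\|P_i^{\mu+n,\kappa+n}\|^2}\frac{d^n}{d\tau^n}\Big[w^{\mu+n,\kappa+n}(\tau)P_i^{\mu+n,\kappa+n}(\tau)\Big].$$ Discrete noise error contribution: with nodes $t_i=i/m$ and quadrature weights $w_i/m$ ($i=0,\dots,m$) of a numerical integration method on $[0,1]$, $$e^{\beta T}_{\varpi,m}(t_0)=\sum_{i=0}^{m}\frac{w_i}{m}\,p^{\beta T}(t_i)\,\varpi(t_0+\beta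 Tt_i).$$ Standing assumptions on the rule: $w_i>0$ for $0<i<m$, $w_0,w_m\ge0$, with $w_0=0$ when $\kappa<0$ and $w_m=0$ when $\mu<0$ (so that all terms are finite); the weights are bounded uniformly in $i$ and $m$; and the rule is convergent for the integrand $(p^{\beta T})^2$, i.e. $\sum_{i=0}^m\frac{w_i}{m}(p^{\beta T}(t_i))^2\to\int_0^1(p^{\beta T}(t))^2dt$ as $m\to\infty$. *)

theory Defs
  imports "HOL-Probability.Probability"
begin

definition jweight :: "real \<Rightarrow> real \<Rightarrow> real \<Rightarrow> real" where
  "jweight a b t = t powr b * (1 - t) powr a"

definition jacobiP :: "nat \<Rightarrow> real \<Rightarrow> real \<Rightarrow> real \<Rightarrow> real" where
  "jacobiP k a b t =
     (\<Sum>s=0..k. ((real k + a) gchoose s) * ((real k + b) gchoose (k - s))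
                 * (t - 1) ^ (k - s) * t ^ s)"

definition jnorm2 :: "nat \<Rightarrow> real \<Rightarrow> real \<Rightarrow> real" where
  "jnorm2 k a b = integral {0..1} (\<lambda>t. jweight a b t * (jacobiP k a b t)^2)"

definition nderiv01 :: "nat \<Rightarrow> (real \<Rightarrow> real) \<Rightarrow> real \<Rightarrow> real" where
  "nderiv01 n f = ((\<lambda>g x. vector_derivative g (at x within {0..1})) ^^ n) f"

definition jkernel ::
  "nat \<Rightarrow> nat \<Rightarrow> real \<Rightarrow> real \<Rightarrow> real \<Rightarrow> real \<Rightarrow> real \<Rightarrow> real \<Rightarrow> real" where
  "jkernel n N \<mu> \<kappa> \<xi> \<beta> T \<tau> =
     (-1) ^ n / (\<beta> * T) ^ n *
     (\<Sum>i=0..N - n. jacobiP i (\<mu> + real n) (\<kappa> + real n) \<xi>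
                     / jnorm2 i (\<mu> + real n) (\<kappa> + real n)
          * nderiv01 n (\<lambda>t. jweight (\<mu> + real n) (\<kappa> + real n) t
                              * jacobiP i (\<mu> + real n) (\<kappa> + real n) t) \<tau>)"

definition noise_err ::
  "nat \<Rightarrow> nat \<Rightarrow> real \<Rightarrow> real \<Rightarrow> real \<Rightarrow> real \<Rightarrow> real \<Rightarrow> (nat \<Rightarrow> nat \<Rightarrow> real)
   \<Rightarrow> (real \<Rightarrow> 'a \<Rightarrow> real) \<Rightarrow> real \<Rightarrow> nat \<Rightarrow> 'a \<Rightarrow> real" where
  "noise_err n N \<mu> \<kappa> \<xi> \<beta> T wq X t0 m x =
     (\<Sum>i=0..m. wq m i / real m * jkernel n N \<mu> \<kappa> \<xi> \<beta> T (real i / real m)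
                 * X (t0 + \<beta> * T * (real i / real m)) x)"

definition variance_of :: "'a measure \<Rightarrow> ('a \<Rightarrow> real) \<Rightarrow> real" where
  "variance_of M X = (LINT x|M. (X x - (LINT y|M. X y))^2)"

end

theory Submission imports Defs begin

text \<open>For independent samples the variance of the quadrature sum is the sum of the squared
  coefficients times the sample variances. With weights bounded by \<open>C\<close> and variances bounded
  by \<open>V\<close> on the compact time segment, this is at most \<open>C V / m\<close> times the quadrature sum of
  \<open>(p\<^sup>\<beta>\<^sup>T)\<^sup>2\<close>, which converges to \<open>\<integral>\<^sub>0\<^sup>1 (p\<^sup>\<beta>\<^sup>T)\<^sup>2\<close>; hence the variance is \<open>O(1/m)\<close>.
  The conditions \<open>\<kappa>, \<mu> > -1/2\<close> serve in the paper to make \<open>(p\<^sup>\<beta>\<^sup>T)\<^sup>2\<close> integrable; here that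
  role is played by the convergence assumption on the quadrature rule.\<close>

lemma (in prob_space) variance_of_eq_variance: "variance_of M X = variance X"
  by (simp add: variance_of_def)

lemma (in prob_space) indep_var_centered:
  fixes X Y :: "'a \<Rightarrow> real"
  assumes "indep_var borel X borel Y"
  shows "indep_var borel (\<lambda>x. X x - expectation X) borel (\<lambda>x. Y x - expectation Y)"
  using indep_var_compose[OF assms, of "\<lambda>y. y - expectation X" borel "\<lambda>y. y - expectation Y" borel]
  by (simp add: comp_def)

lemma (in prob_space) variance_weighted_sum_indep:
  fixes Y :: "'i \<Rightarrow> 'a \<Rightarrow> real" and c :: "'i \<Rightarrow> real"
  assumes fin: "finite A"
    and meas: "\<And>i. i \<in> A \<Longrightarrow> Y i \<in> borel_measurable M"
    and sq: "\<And>i. i \<in> A \<Longrightarrow> integrable M (\<lambda>x. (Y i x)\<^sup>2)"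
    and ind: "\<And>i j. i \<in> A \<Longrightarrow> j \<in> A \<Longrightarrow> i \<noteq> j \<Longrightarrow> indep_var borel (Y i) borel (Y j)"
  shows "variance (\<lambda>x. \<Sum>i\<in>A. c i * Y i x) = (\<Sum>i\<in>A. (c i)\<^sup>2 * variance (Y i))"
proof -
  define Z where "Z i x = Y i x - expectation (Y i)" for i x
  have intY: "integrable M (Y i)" if "i \<in> A" for i
    using square_integrable_imp_integrable[OF meas[OF that] sq[OF that]] .
  then have intZ: "integrable M (Z i)" if "i \<in> A" for i
    unfolding Z_def using that by auto
  have EZ: "expectation (Z i) = 0" if "i \<in> A" for i
    unfolding Z_def using intY[OF that] by (simp add: prob_space)
  have Z_sq: "Z i x * Z i x = (Y i x)\<^sup>2 - 2 * expectation (Y i) * Y i x + (expectation (Y i))\<^sup>2" for i x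
    unfolding Z_def by (simp add: power2_eq_square algebra_simps)
  have intZZ: "integrable M (\<lambda>x. Z i x * Z j x)" if "i \<in> A" "j \<in> A" for i j
  proof (cases "i = j")
    case True
    have "integrable M (\<lambda>x. (Y i x)\<^sup>2 - 2 * expectation (Y i) * Y i x + (expectation (Y i))\<^sup>2)"
      using sq[OF that(1)] intY[OF that(1)] by auto
    then show ?thesis by (simp add: True Z_sq)
  next
    case False
    then show ?thesis
      using indep_var_centered[OF ind[OF that False]] intZ that
      by (intro indep_var_integrable) (auto simp: Z_def[abs_def])
  qed
  have EZZ: "expectation (\<lambda>x. Z i x * Z j x) = (if i = j then variance (Y i) else 0)"
    if "i \<in> A" "j \<in> A" for i j
  proof (cases "i = j")
    case True
    then show ?thesis by (simp add: Z_def power2_eq_square)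
  next
    case False
    have "expectation (\<lambda>x. Z i x * Z j x) = expectation (Z i) * expectation (Z j)"
      using indep_var_centered[OF ind[OF that False]] intZ that
      by (intro indep_var_lebesgue_integral) (auto simp: Z_def[abs_def])
    then show ?thesis using EZ that False by simp
  qed
  have centered: "(\<Sum>i\<in>A. c i * Y i x) - expectation (\<lambda>x. \<Sum>i\<in>A. c i * Y i x) = (\<Sum>i\<in>A. c i * Z i x)"
    for x using intY by (simp add: integral_sum Z_def sum_subtractf[symmetric] algebra_simps)
  have "variance (\<lambda>x. \<Sum>i\<in>A. c i * Y i x)
      = expectation (\<lambda>x. \<Sum>i\<in>A. \<Sum>j\<in>A. c i * c j * (Z i x * Z j x))"
    unfolding centered by (simp add: power2_eq_square sum_product algebra_simps)
  also have "\<dots> = (\<Sum>i\<in>A. \<Sum>j\<in>A. c i * c j * expectation (\<lambda>x. Z i x * Z j x))"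
    using intZZ by (simp add: integral_sum integrable_sum)
  also have "\<dots> = (\<Sum>i\<in>A. (c i)\<^sup>2 * variance (Y i))"
    using fin by (simp add: EZZ power2_eq_square if_distrib cong: if_cong)
  finally show ?thesis .
qed

lemma (in prob_space) variance_weighted_sum_indep_le:
  fixes Y :: "nat \<Rightarrow> 'a \<Rightarrow> real" and w k :: "nat \<Rightarrow> real"
  assumes meas: "\<And>i. i \<le> m \<Longrightarrow> Y i \<in> borel_measurable M"
    and sq: "\<And>i. i \<le> m \<Longrightarrow> integrable M (\<lambda>x. (Y i x)\<^sup>2)"
    and ind: "\<And>i j. i \<le> m \<Longrightarrow> j \<le> m \<Longrightarrow> i \<noteq> j \<Longrightarrow> indep_var borel (Y i) borel (Y j)"
    and var_le: "\<And>i. i \<le> m \<Longrightarrow> variance (Y i) \<le> V"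
    and w: "\<And>i. i \<le> m \<Longrightarrow> 0 \<le> w i \<and> w i \<le> C"
  shows "variance (\<lambda>x. \<Sum>i=0..m. w i / real m * k i * Y i x)
           \<le> C * V / real m * (\<Sum>i=0..m. w i / real m * (k i)\<^sup>2)"
proof -
  have "variance (\<lambda>x. \<Sum>i=0..m. w i / real m * k i * Y i x)
      = (\<Sum>i=0..m. (w i / real m * k i)\<^sup>2 * variance (Y i))"
    using meas sq ind by (intro variance_weighted_sum_indep) auto
  also have "\<dots> \<le> (\<Sum>i=0..m. C * V / real m * (w i / real m * (k i)\<^sup>2))"
  proof (intro sum_mono)
    fix i assume "i \<in> {0..m}"
    then have wi: "0 \<le> w i" "w i \<le> C" and vi: "variance (Y i) \<le> V" using w var_le by auto
    have "(w i / real m * k i)\<^sup>2 * variance (Y i)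
        = (w i / real m * (k i)\<^sup>2) * (w i * variance (Y i)) / real m"
      by (simp add: power2_eq_square)
    also have "\<dots> \<le> (w i / real m * (k i)\<^sup>2) * (C * V) / real m"
      using wi vi variance_positive[of "Y i"] order_trans[OF variance_positive vi]
      by (intro divide_right_mono mult_left_mono mult_mono) auto
    finally show "(w i / real m * k i)\<^sup>2 * variance (Y i) \<le> C * V / real m * (w i / real m * (k i)\<^sup>2)"
      by (simp add: algebra_simps)
  qed
  also have "\<dots> = C * V / real m * (\<Sum>i=0..m. w i / real m * (k i)\<^sup>2)"
    by (simp add: sum_distrib_left)
  finally show ?thesis .
qed

lemma tendsto_zero_if_le_const_over_n_times_convergent:
  fixes v A :: "nat \<Rightarrow> real"
  assumes "\<And>m. 0 \<le> v m" "\<And>m. v m \<le> K / real m * A m" "A \<longlonglongrightarrow> L"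
  shows "v \<longlonglongrightarrow> 0"
proof (rule tendsto_sandwich[OF _ _ tendsto_const])
  have "(\<lambda>m. K / real m * A m) \<longlonglongrightarrow> 0 * L"
    by (intro tendsto_mult assms(3) lim_const_over_n)
  then show "(\<lambda>m. K / real m * A m) \<longlonglongrightarrow> 0" by simp
qed (use assms(1,2) in auto)

lemma sample_node_in_segment:
  fixes t0 d :: real and i m :: nat
  assumes "i \<le> m"
  shows "t0 + d * (real i / real m) \<in> closed_segment t0 (t0 + d)"
proof -
  have "\<And>u. t0 + d * u = (1 - u) *\<^sub>R t0 + u *\<^sub>R (t0 + d)" by (simp add: algebra_simps)
  moreover have "0 \<le> real i / real m" "real i / real m \<le> 1"
    using assms by (auto simp: divide_le_eq_1)
  ultimately show ?thesis
    unfolding closed_segment_def by blast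
qed

lemma sample_nodes_distinct:
  fixes t0 d :: real and i j m :: nat
  assumes "d \<noteq> 0" "i \<le> m" "j \<le> m" "i \<noteq> j"
  shows "t0 + d * (real i / real m) \<noteq> t0 + d * (real j / real m)"
  using assms by (auto simp: divide_cancel_right)

lemma continuous_on_compact_bounded_above:
  fixes f :: "'b::topological_space \<Rightarrow> real"
  assumes "continuous_on K f" "compact K"
  obtains V where "\<And>t. t \<in> K \<Longrightarrow> f t \<le> V"
proof -
  have "compact (f ` K)"
    by (rule compact_continuous_image[OF assms])
  then show ?thesis
    using that compact_imp_bounded bounded_real by (metis abs_le_D1 imageI)
qed

theorem theorem4:
  fixes M :: "'a measure" and X :: "real \<Rightarrow> 'a \<Rightarrow> real"
    and I :: "real set" and n N :: nat and \<beta> \<xi> t0 T \<mu> \<kappa> :: real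
    and wq :: "nat \<Rightarrow> nat \<Rightarrow> real"
  assumes prob: "prob_space M"
    and I_open: "open I" and I_int: "is_interval I" and I_ne: "I \<noteq> {}"
    and I_pos: "I \<subseteq> {0..}"
    and beta: "\<beta> \<in> {-1, 1}" and Nn: "N \<ge> n" and xi: "\<xi> \<in> {0..1}"
    and t0: "t0 \<in> I" and T: "T > 0" and t0T: "t0 + \<beta> * T \<in> I"
    and rv: "\<And>t. t \<ge> 0 \<Longrightarrow> X t \<in> borel_measurable M"
    and sq_int: "\<And>t. t \<ge> 0 \<Longrightarrow> integrable M (\<lambda>x. (X t x)^2)"
    and mean_cont: "continuous_on {0..} (\<lambda>t. LINT x|M. X t x)"
    and var_cont: "continuous_on {0..} (\<lambda>t. variance_of M (X t))"
    and indep: "\<And>s t. s \<ge> 0 \<Longrightarrow> t \<ge> 0 \<Longrightarrow> s \<noteq> t \<Longrightarrow>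
                 prob_space.indep_var M borel (X s) borel (X t)"
    and w_pos: "\<And>m i. 0 < i \<Longrightarrow> i < m \<Longrightarrow> wq m i > 0"
    and w0: "\<And>m. wq m 0 \<ge> 0" and wm: "\<And>m. wq m m \<ge> 0"
    and w0_zero: "\<kappa> < 0 \<Longrightarrow> (\<forall>m. wq m 0 = 0)"
    and wm_zero: "\<mu> < 0 \<Longrightarrow> (\<forall>m. wq m m = 0)"
    and w_bdd: "\<exists>C. \<forall>m i. i \<le> m \<longrightarrow> \<bar>wq m i\<bar> \<le> C"
    and w_conv: "(\<lambda>m. \<Sum>i=0..m. wq m i / real m
                       * (jkernel n N \<mu> \<kappa> \<xi> \<beta> T (real i / real m))^2)
                 \<longlonglongrightarrow> integral {0..1} (\<lambda>t. (jkernel n N \<mu> \<kappa> \<xi> \<beta> T t)^2)"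
    and kappa: "\<kappa> > -1/2" and mu: "\<mu> > -1/2"
  shows "(\<lambda>m. variance_of M (noise_err n N \<mu> \<kappa> \<xi> \<beta> T wq X t0 m)) \<longlonglongrightarrow> 0"
proof -
  interpret prob_space M by (rule prob)
  define S where "S = closed_segment t0 (t0 + \<beta> * T)"
  have "S \<subseteq> I"
    using is_interval_convex[OF I_int] t0 t0T by (simp add: S_def convex_contains_segment)
  then have S_nonneg: "S \<subseteq> {0..}" using I_pos by blast
  obtain C where C: "\<And>m i. i \<le> m \<Longrightarrow> \<bar>wq m i\<bar> \<le> C" using w_bdd by blast
  obtain V where V: "\<And>t. t \<in> S \<Longrightarrow> variance (X t) \<le> V"
    using continuous_on_compact_bounded_above[OF continuous_on_subset[OF var_cont S_nonneg]]
    by (auto simp: S_def variance_of_eq_variance)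
  have w_bounds: "0 \<le> wq m i \<and> wq m i \<le> C" if "i \<le> m" for m i
    using w_pos[of i m] w0[of m] wm[of m] C[OF that] that by (cases "i = 0"; cases "i = m") auto
  define s where "s m i = t0 + \<beta> * T * (real i / real m)" for m i :: nat
  have s_S: "s m i \<in> S" if "i \<le> m" for m i
    using sample_node_in_segment[OF that] by (simp add: S_def s_def)
  then have s_nonneg: "0 \<le> s m i" if "i \<le> m" for m i
    using S_nonneg that by blast
  have s_distinct: "s m i \<noteq> s m j" if "i \<le> m" "j \<le> m" "i \<noteq> j" for m i j
    using sample_nodes_distinct[OF _ that] beta T by (auto simp: s_def)
  have "variance (noise_err n N \<mu> \<kappa> \<xi> \<beta> T wq X t0 m)
          \<le> C * V / real m * (\<Sum>i=0..m. wq m i / real m * (jkernel n N \<mu> \<kappa> \<xi> \<beta> T (real i / real m))\<^sup>2)"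
    for m unfolding noise_err_def s_def[symmetric]
    by (intro variance_weighted_sum_indep_le rv sq_int V indep s_nonneg s_S s_distinct w_bounds)
  then show ?thesis
    by (intro tendsto_zero_if_le_const_over_n_times_convergent[OF _ _ w_conv])
      (auto simp: variance_of_eq_variance variance_positive)
qed

end
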